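(* Let $X$ be a compact metric space and suppose $f:X\to X$ is a continuous map that is sensitive, minimal, and has the shadowing property. Then there are a sequence $\alpha$ of prime numbers and a continuous map $\pi:X\to\Delta_\alpha$ such that $g_\alpha\circ\pi=\pi\circ f$ and $\pi$ is one-to-one on a dense subset of $X$.
   Context: $f$ is minimal if $\overline{\{f^n(x):n\ge0\}}=X$ for all $x\in X$. $f$ is sensitive if there is $\delta>0$ such that for every nonempty open $U\subseteq X$ there is $n>0$ with $\mathrm{diam}(f^n(U))>\delta$. A sequence $(x_n)_{n\ge0}$ is a $\delta$-pseudo-orbit if $d(f(x_n),x_{n+1})\le\delta$ for all $n$; $f$ has the shadowing property if for every $\epsilon>0$ there is $\delta>0$ such that for every $\delta$-pseudo-orbit $(x_n)$ there is $y\in X$ with $d(f^n(y),x_n)<\epsilon$ for all $n\ge0$. For $\alpha=(j_1,j_2,\dots)$ with integers $j_i\ge2$, $\Delta_\alpha$ is the set of sequences $(r_1,r_2,\dots)$ with $r_i\in\{0,\dots,j_i-1\}$, with metric $d_\alpha(r,s)=\sum_i\delta(r_i,s_i)/2^i$ ($\delta(a,b)=1$ if $a\ne b$, else $0$), and $g_\alpha:\Delta_\alpha\to\Delta_\alpha$ is the adding machine map $r\mapsto r+(1,0,0,\dots)$, addition being coordinatewise with carry (first coordinate mod $j_1$, carry into the second coordinate taken mod $j_2$, etc.). *)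

theory Defs
  imports "HOL-Analysis.Analysis" "HOL-Computational_Algebra.Primes"
begin

definition minimal_on :: "'a::metric_space set \<Rightarrow> ('a \<Rightarrow> 'a) \<Rightarrow> bool" where
  "minimal_on X f \<longleftrightarrow> (\<forall>x\<in>X. closure {(f ^^ n) x | n. True} = X)"

definition sensitive_on :: "'a::metric_space set \<Rightarrow> ('a \<Rightarrow> 'a) \<Rightarrow> bool" where
  "sensitive_on X f \<longleftrightarrow> (\<exists>\<delta>>0. \<forall>U. openin (top_of_set X) U \<and> U \<noteq> {} \<longrightarrow>
      (\<exists>n>0. diameter ((f ^^ n) ` U) > \<delta>))"

definition shadowing_on :: "'a::metric_space set \<Rightarrow> ('a \<Rightarrow> 'a) \<Rightarrow> bool" where
  "shadowing_on X f \<longleftrightarrow> (\<forall>\<epsilon>>0. \<exists>\<delta>>0. \<forall>xs::nat \<Rightarrow> 'a.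
      ((\<forall>n. xs n \<in> X) \<and> (\<forall>n. dist (f (xs n)) (xs (Suc n)) \<le> \<delta>)) \<longrightarrow>
      (\<exists>y\<in>X. \<forall>n. dist ((f ^^ n) y) (xs n) < \<epsilon>))"

(* Odometer space Delta_alpha; coordinates indexed from 0 (coordinate i here is r_(i+1)) *)

definition Delta :: "(nat \<Rightarrow> nat) \<Rightarrow> (nat \<Rightarrow> nat) set" where
  "Delta \<alpha> = {r. \<forall>i. r i < \<alpha> i}"

definition dist_alpha :: "(nat \<Rightarrow> nat) \<Rightarrow> (nat \<Rightarrow> nat) \<Rightarrow> real" where
  "dist_alpha r s = (\<Sum>i. (if r i \<noteq> s i then 1 else 0) / 2 ^ (Suc i))"

fun carry :: "(nat \<Rightarrow> nat) \<Rightarrow> (nat \<Rightarrow> nat) \<Rightarrow> nat \<Rightarrow> nat" where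
  "carry \<alpha> r 0 = 1"
| "carry \<alpha> r (Suc i) = (if r i + carry \<alpha> r i \<ge> \<alpha> i then 1 else 0)"

definition g_alpha :: "(nat \<Rightarrow> nat) \<Rightarrow> (nat \<Rightarrow> nat) \<Rightarrow> (nat \<Rightarrow> nat)" where
  "g_alpha \<alpha> r = (\<lambda>i. (r i + carry \<alpha> r i) mod \<alpha> i)"

definition continuous_into_Delta :: "'a::metric_space set \<Rightarrow> ('a \<Rightarrow> nat \<Rightarrow> nat) \<Rightarrow> bool" where
  "continuous_into_Delta X \<pi> \<longleftrightarrow> (\<forall>x\<in>X. \<forall>e>0. \<exists>d>0. \<forall>y\<in>X.
      dist y x < d \<longrightarrow> dist_alpha (\<pi> y) (\<pi> x) < e)"

end

theory Submission
  imports Defs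
begin

text \<open>Fix a base point \<open>x\<^sub>0\<close>. Minimality makes \<open>X\<close> chain transitive, and at each scale \<open>e\<close>
  the lengths of \<open>e\<close>-chains from \<open>x\<^sub>0\<close> to \<open>y\<close> are well defined modulo the gcd \<open>p(e)\<close>
  of the loop lengths at \<open>x\<^sub>0\<close>. This phase is a locally constant map \<open>X \<rightarrow> \<int>/p(e)\<close> that
  \<open>f\<close> shifts by one, and \<open>p(e)\<close> divides \<open>p(e')\<close> for \<open>e' \<le> e\<close>. By shadowing, loops of
  length \<open>p\<close> make \<open>f\<^sup>p\<close> move every point only a little, so if the periods stayed bounded
  the iterates of \<open>f\<close> would be equicontinuous, contradicting sensitivity. Unbounded
  periods yield primes \<open>\<alpha>\<^sub>i\<close> whose partial products divide periods, and the phases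
  modulo these products form a point of the inverse limit \<open>\<Delta>\<^sub>\<alpha>\<close> of the groups
  \<open>\<int>/\<alpha>\<^sub>0\<cdots>\<alpha>\<^sub>k\<^sub>-\<^sub>1\<close>. This gives the factor map; along the orbit of \<open>x\<^sub>0\<close> it
  sends \<open>f\<^sup>n x\<^sub>0\<close> to the residues of \<open>n\<close>, hence is injective there.\<close>

section \<open>Mixed-radix expansions and the adding machine\<close>

text \<open>\<open>\<Delta>\<^sub>\<alpha>\<close> is the inverse limit of the cyclic groups \<open>\<int>/M\<^sub>k\<close> with
  \<open>M\<^sub>k = \<alpha>\<^sub>0 \<cdots> \<alpha>\<^sub>k\<^sub>-\<^sub>1\<close>: a point is a compatible sequence of residues \<open>c\<^sub>k\<close>, its
  coordinates are the mixed-radix digits of the \<open>c\<^sub>k\<close>, and adding \<open>1\<close> to every residue is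
  the adding machine \<open>g\<^sub>\<alpha>\<close>.\<close>

definition place_value :: "(nat \<Rightarrow> nat) \<Rightarrow> nat \<Rightarrow> nat" where
  "place_value \<alpha> k = (\<Prod>i<k. \<alpha> i)"

definition compatible_residues :: "(nat \<Rightarrow> nat) \<Rightarrow> (nat \<Rightarrow> nat) \<Rightarrow> bool" where
  "compatible_residues \<alpha> c \<longleftrightarrow>
     (\<forall>k. c k < place_value \<alpha> k \<and> c (Suc k) mod place_value \<alpha> k = c k)"

definition digits :: "(nat \<Rightarrow> nat) \<Rightarrow> (nat \<Rightarrow> nat) \<Rightarrow> nat \<Rightarrow> nat" where
  "digits \<alpha> c i = c (Suc i) div place_value \<alpha> i"

lemma place_value_0 [simp]: "place_value \<alpha> 0 = 1"
  by (simp add: place_value_def)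

lemma place_value_Suc [simp]: "place_value \<alpha> (Suc k) = place_value \<alpha> k * \<alpha> k"
  by (simp add: place_value_def)

lemma place_value_dvd: "k \<le> k' \<Longrightarrow> place_value \<alpha> k dvd place_value \<alpha> k'"
  unfolding place_value_def by (intro prod_dvd_prod_subset) auto

lemma place_value_ge_power:
  assumes "\<And>i. 2 \<le> \<alpha> i"
  shows "2 ^ k \<le> place_value \<alpha> k"
proof (induction k)
  case (Suc k)
  then show ?case using assms[of k] by (simp add: mult_le_mono mult.commute)
qed simp

lemma mod_mult_div_eq_div_mod:
  fixes a m b :: nat
  assumes "0 < m"
  shows "a mod (m * b) div m = a div m mod b"
  using assms by (simp add: mod_mult2_eq)

lemma dist_alpha_le_if_eq_below:
  assumes "\<forall>i<K. r i = s i"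
  shows "dist_alpha r s \<le> (1/2) ^ K"
proof -
  define t where "t i = (if r i \<noteq> s i then 1 else 0) / (2::real) ^ (Suc i)" for i
  have t0: "0 \<le> t i" for i unfolding t_def by simp
  have tle: "t i \<le> (1/2) ^ Suc i" for i unfolding t_def by (simp add: power_one_over)
  have gs: "summable (\<lambda>i. (1/2::real) ^ Suc i)" by (simp add: summable_geometric)
  have st: "summable t" by (rule summable_comparison_test'[OF gs]) (use t0 tle in auto)
  have "dist_alpha r s = suminf t" unfolding dist_alpha_def t_def ..
  also have "\<dots> = (\<Sum>n. t (n + K)) + (\<Sum>i<K. t i)" by (rule suminf_split_initial_segment[OF st])
  also have "(\<Sum>i<K. t i) = 0" using assms unfolding t_def by simp
  also have "(\<Sum>n. t (n + K)) \<le> (\<Sum>n. (1/2::real) ^ Suc K * (1/2) ^ n)"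
  proof (rule suminf_le)
    show "t (n + K) \<le> (1/2::real) ^ Suc K * (1/2) ^ n" for n
      using tle[of "n+K"] by (simp add: power_add[symmetric] add.commute)
    show "summable (\<lambda>n. t (n + K))" using st by (simp add: summable_iff_shift)
    show "summable (\<lambda>n. (1/2::real) ^ Suc K * (1/2) ^ n)"
      by (intro summable_mult summable_geometric) simp
  qed
  also have "\<dots> = (1/2::real) ^ K"
    using suminf_mult[OF summable_geometric[of "1/2::real"], of "(1/2) ^ Suc K"]
      suminf_geometric[of "1/2::real"] by simp
  finally show ?thesis by simp
qed

context
  fixes \<alpha> :: "nat \<Rightarrow> nat"
  assumes \<alpha>_pos: "\<And>i. 0 < \<alpha> i"
begin

lemma place_value_pos: "0 < place_value \<alpha> k"
  using \<alpha>_pos by (simp add: place_value_def)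

context
  fixes c :: "nat \<Rightarrow> nat"
  assumes c: "compatible_residues \<alpha> c"
begin

lemma residue_less: "c k < place_value \<alpha> k"
  using c by (simp add: compatible_residues_def)

lemma residue_mod:
  assumes "k \<le> k'"
  shows "c k' mod place_value \<alpha> k = c k"
  using assms
proof (induction k' rule: dec_induct)
  case base
  show ?case using residue_less by simp
next
  case (step n)
  have "c (Suc n) mod place_value \<alpha> k = c (Suc n) mod place_value \<alpha> n mod place_value \<alpha> k"
    using place_value_dvd[OF step.hyps(1)] by (simp add: mod_mod_cancel)
  also have "\<dots> = c k"
    using c step.IH by (simp add: compatible_residues_def)
  finally show ?case .
qed

lemma residue_Suc_eq: "c (Suc i) = digits \<alpha> c i * place_value \<alpha> i + c i"
  using residue_mod[of i "Suc i"] div_mult_mod_eq[of "c (Suc i)" "place_value \<alpha> i"]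
  by (simp add: digits_def)

lemma digits_less: "digits \<alpha> c i < \<alpha> i"
  using residue_less[of "Suc i"] by (simp add: digits_def less_mult_imp_div_less mult.commute)

lemma digits_eq_residue_div_mod:
  assumes "i < K"
  shows "digits \<alpha> c i = c K div place_value \<alpha> i mod \<alpha> i"
  using residue_mod[of "Suc i" K] assms
    mod_mult_div_eq_div_mod[OF place_value_pos, of "c K" i "\<alpha> i"]
  by (simp add: digits_def)

lemma digits_add_carry:
  "digits \<alpha> c i + Suc (c i) div place_value \<alpha> i = Suc (c (Suc i)) div place_value \<alpha> i"
proof -
  have "Suc (c (Suc i)) = Suc (c i) + digits \<alpha> c i * place_value \<alpha> i"
    using residue_Suc_eq by simp
  then show ?thesis
    using div_mult_self1[of "place_value \<alpha> i" "Suc (c i)" "digits \<alpha> c i"] place_value_pos[of i]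
    by simp
qed

lemma carry_digits: "carry \<alpha> (digits \<alpha> c) i = Suc (c i) div place_value \<alpha> i"
proof (induction i)
  case 0
  show ?case using residue_less[of 0] by simp
next
  case (Suc i)
  define v where "v = Suc (c (Suc i)) div place_value \<alpha> i"
  have "Suc (c (Suc i)) \<le> place_value \<alpha> i * \<alpha> i"
    using residue_less[of "Suc i"] by simp
  then have "v \<le> \<alpha> i"
    unfolding v_def using place_value_pos[of i]
    by (metis div_le_mono nonzero_mult_div_cancel_left not_gr0)
  then have "v div \<alpha> i = (if \<alpha> i \<le> v then 1 else 0)"
    using \<alpha>_pos[of i] by auto
  moreover have "Suc (c (Suc i)) div place_value \<alpha> (Suc i) = v div \<alpha> i"
    by (simp add: v_def div_mult2_eq)
  ultimately show ?case
    using Suc.IH digits_add_carry[of i] by (simp add: v_def)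
qed

lemma g_alpha_digits:
  "g_alpha \<alpha> (digits \<alpha> c) = digits \<alpha> (\<lambda>k. Suc (c k) mod place_value \<alpha> k)"
proof
  fix i
  show "g_alpha \<alpha> (digits \<alpha> c) i = digits \<alpha> (\<lambda>k. Suc (c k) mod place_value \<alpha> k) i"
    using digits_add_carry[of i]
    by (simp add: g_alpha_def carry_digits digits_def mod_mult_div_eq_div_mod place_value_pos)
qed

end

lemma digits_inj:
  assumes "compatible_residues \<alpha> c" "compatible_residues \<alpha> c'" "digits \<alpha> c = digits \<alpha> c'"
  shows "c = c'"
proof
  fix k
  show "c k = c' k"
  proof (induction k)
    case 0
    show ?case using residue_less[OF assms(1), of 0] residue_less[OF assms(2), of 0] by simp
  next
    case (Suc k)
    then show ?case using residue_Suc_eq[OF assms(1)] residue_Suc_eq[OF assms(2)] assms(3) by metis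
  qed
qed

lemma continuous_into_Delta_digits:
  fixes X :: "'a::metric_space set" and c :: "nat \<Rightarrow> 'a \<Rightarrow> nat"
  assumes compatible: "\<And>y. y \<in> X \<Longrightarrow> compatible_residues \<alpha> (\<lambda>k. c k y)"
    and locally_const: "\<And>k y. y \<in> X \<Longrightarrow> \<exists>r>0. \<forall>z\<in>X. dist z y < r \<longrightarrow> c k z = c k y"
  shows "continuous_into_Delta X (\<lambda>y. digits \<alpha> (\<lambda>k. c k y))"
  unfolding continuous_into_Delta_def
proof (intro ballI allI impI)
  fix y :: 'a and e :: real
  assume y: "y \<in> X" and e: "0 < e"
  obtain K where K: "(1/2::real) ^ K < e"
    using real_arch_pow_inv[OF e, of "1/2"] by auto
  obtain r where r: "0 < r" "\<forall>z\<in>X. dist z y < r \<longrightarrow> c K z = c K y"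
    using locally_const[OF y] by blast
  have "dist_alpha (digits \<alpha> (\<lambda>k. c k z)) (digits \<alpha> (\<lambda>k. c k y)) < e"
    if z: "z \<in> X" "dist z y < r" for z
  proof -
    have "\<forall>i<K. digits \<alpha> (\<lambda>k. c k z) i = digits \<alpha> (\<lambda>k. c k y) i"
      using digits_eq_residue_div_mod[OF compatible[OF z(1)]]
        digits_eq_residue_div_mod[OF compatible[OF y]] r(2) z by simp
    then show ?thesis using dist_alpha_le_if_eq_below K by (meson le_less_trans)
  qed
  then show "\<exists>d>0. \<forall>z\<in>X. dist z y < d \<longrightarrow>
      dist_alpha (digits \<alpha> (\<lambda>k. c k z)) (digits \<alpha> (\<lambda>k. c k y)) < e"
    using r(1) by blast
qed

end

lemma inj_digits_of_nat:
  assumes "\<And>i. 2 \<le> \<alpha> i"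
  shows "inj (\<lambda>n. digits \<alpha> (\<lambda>k. n mod place_value \<alpha> k))"
proof (rule injI)
  fix n n'
  assume eq: "digits \<alpha> (\<lambda>k. n mod place_value \<alpha> k) = digits \<alpha> (\<lambda>k. n' mod place_value \<alpha> k)"
  have \<alpha>_pos: "\<And>i. 0 < \<alpha> i" using assms by (metis less_le_trans pos2)
  have compatible: "compatible_residues \<alpha> (\<lambda>k. m mod place_value \<alpha> k)" for m
    using place_value_pos[OF \<alpha>_pos] place_value_dvd[of _ "Suc _" \<alpha>]
    by (simp add: compatible_residues_def mod_mod_cancel)
  have "n mod place_value \<alpha> (n + n') = n' mod place_value \<alpha> (n + n')"
    using digits_inj[OF \<alpha>_pos compatible compatible eq] by metis
  moreover have "n + n' < place_value \<alpha> (n + n')"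
    using place_value_ge_power[of \<alpha>, OF assms, of "n + n'"] less_exp[of "n + n'"] by linarith
  ultimately show "n = n'" by simp
qed

lemma primes_dividing_divisibility_chain:
  fixes N :: "nat \<Rightarrow> nat"
  assumes pos: "\<And>j. 0 < N j" and chain: "\<And>j j'. j \<le> j' \<Longrightarrow> N j dvd N j'"
    and unbounded: "\<And>B. \<exists>j. B < N j"
  obtains \<alpha> where "\<And>i. prime (\<alpha> i)" "\<And>k. \<exists>j. place_value \<alpha> k dvd N j"
proof -
  have extend: "\<exists>p. prime p \<and> (\<exists>j. m * p dvd N j)" if "m dvd N j0" for m j0
  proof -
    obtain j1 where j1: "m < N j1" using unbounded by blast
    define j where "j = max j0 j1"
    have "N j1 \<le> N j" using chain[of j1 j] pos[of j] by (simp add: j_def dvd_imp_le)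
    moreover have "m dvd N j" using that chain[of j0 j] by (simp add: j_def dvd_trans)
    then obtain t where t: "N j = m * t" by (rule dvdE)
    ultimately have "t \<noteq> 1" using j1 by auto
    then obtain p where "prime p" "p dvd t" using prime_factor_nat by blast
    then show ?thesis using t by (metis mult_dvd_mono dvd_refl)
  qed
  obtain P where P: "\<And>m. (\<exists>j. m dvd N j) \<Longrightarrow> prime (P m) \<and> (\<exists>j. m * P m dvd N j)"
    using extend by metis
  define M where "M = rec_nat 1 (\<lambda>_ m. m * P m)"
  define \<alpha> where "\<alpha> i = P (M i)" for i
  have M_dvd: "\<exists>j. M k dvd N j" for k
  proof (induction k)
    case 0
    show ?case by (simp add: M_def)
  next
    case (Suc k)
    then show ?case using P by (simp add: M_def)
  qed
  have "M k = place_value \<alpha> k" for k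
    by (induction k) (simp_all add: M_def \<alpha>_def)
  then show thesis
    using that[of \<alpha>] P M_dvd by (simp add: \<alpha>_def)
qed

section \<open>Iterates, chains and pseudo-orbits\<close>

lemma diameter_le_dist_bound:
  fixes S :: "'a::metric_space set"
  assumes "0 \<le> d" "\<And>x y. x \<in> S \<Longrightarrow> y \<in> S \<Longrightarrow> dist x y \<le> d"
  shows "diameter S \<le> d"
  using assms by (auto simp: diameter_def intro: cSUP_least)

lemma funpow_mem: "f ` X \<subseteq> X \<Longrightarrow> x \<in> X \<Longrightarrow> (f ^^ n) x \<in> X"
  by (induction n) auto

lemma continuous_on_funpow:
  assumes "f ` X \<subseteq> X" "continuous_on X f"
  shows "continuous_on X (f ^^ n)"
proof (induction n)
  case (Suc n)
  have "continuous_on X (f \<circ> (f ^^ n))"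
    using Suc assms funpow_mem[OF assms(1)]
    by (intro continuous_on_compose) (auto intro: continuous_on_subset)
  then show ?case by simp
qed (simp add: continuous_on_id)

lemma funpow_uniform_modulus:
  assumes "compact X" "f ` X \<subseteq> X" "continuous_on X f" "0 < d"
  shows "\<exists>\<rho>>0. \<forall>r\<le>B. \<forall>x\<in>X. \<forall>y\<in>X. dist x y < \<rho> \<longrightarrow> dist ((f ^^ r) x) ((f ^^ r) y) < d"
proof (induction B)
  case 0
  show ?case using assms(4) by (intro exI[of _ d]) auto
next
  case (Suc B)
  then obtain \<rho> where \<rho>: "0 < \<rho>"
    "\<forall>r\<le>B. \<forall>x\<in>X. \<forall>y\<in>X. dist x y < \<rho> \<longrightarrow> dist ((f ^^ r) x) ((f ^^ r) y) < d"
    by blast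
  have "uniformly_continuous_on X (f ^^ Suc B)"
    by (rule compact_uniformly_continuous[OF continuous_on_funpow[OF assms(2,3)] assms(1)])
  then obtain \<rho>' where \<rho>': "0 < \<rho>'"
    "\<forall>x\<in>X. \<forall>y\<in>X. dist y x < \<rho>' \<longrightarrow> dist ((f ^^ Suc B) y) ((f ^^ Suc B) x) < d"
    using assms(4) unfolding uniformly_continuous_on_def by metis
  have "dist ((f ^^ r) x) ((f ^^ r) y) < d"
    if "r \<le> Suc B" "x \<in> X" "y \<in> X" "dist x y < min \<rho> \<rho>'" for r x y
    using that \<rho>(2) \<rho>'(2) by (cases "r = Suc B") auto
  then show ?case using \<rho>(1) \<rho>'(1) by (intro exI[of _ "min \<rho> \<rho>'"]) auto
qed

text \<open>If \<open>f\<^bsup>qm\<^esup>\<close> is uniformly \<open>\<epsilon>\<close>-close to the identity for some \<open>m \<le> B\<close>, then every \<open>f\<^sup>n\<close> is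
  \<open>\<epsilon>\<close>-close to \<open>f\<^sup>r \<circ> f\<^bsup>qm\<^esup>\<close> with \<open>r < m \<le> B\<close>, and the finitely many \<open>f\<^sup>r\<close> are
  equicontinuous: small balls are never expanded.\<close>

lemma not_sensitive_on_if_bounded_almost_periods:
  assumes "compact X" "f ` X \<subseteq> X" "continuous_on X f" "x0 \<in> X"
    and almost_periods: "\<And>\<epsilon>. 0 < \<epsilon> \<Longrightarrow>
      \<exists>m. 0 < m \<and> m \<le> B \<and> (\<forall>q. \<forall>z\<in>X. dist ((f ^^ (q * m)) z) z \<le> \<epsilon>)"
  shows "\<not> sensitive_on X f"
proof
  assume "sensitive_on X f"
  then obtain \<delta> where \<delta>: "0 < \<delta>"
    "\<And>U. openin (top_of_set X) U \<Longrightarrow> U \<noteq> {} \<Longrightarrow> \<exists>n>0. \<delta> < diameter ((f ^^ n) ` U)"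
    unfolding sensitive_on_def by blast
  obtain \<rho> where \<rho>: "0 < \<rho>"
    "\<forall>r\<le>B. \<forall>x\<in>X. \<forall>y\<in>X. dist x y < \<rho> \<longrightarrow> dist ((f ^^ r) x) ((f ^^ r) y) < \<delta>/3"
    using funpow_uniform_modulus[OF assms(1-3), of "\<delta>/3" B] \<delta>(1) by auto
  obtain m where m: "0 < m" "m \<le> B" "\<And>q z. z \<in> X \<Longrightarrow> dist ((f ^^ (q * m)) z) z \<le> \<rho>/4"
    using almost_periods[of "\<rho>/4"] \<rho>(1) by auto
  define U where "U = X \<inter> ball x0 (\<rho>/2)"
  have "openin (top_of_set X) U" "U \<noteq> {}"
    using assms(4) \<rho>(1) by (auto simp: U_def)
  then obtain n where n: "\<delta> < diameter ((f ^^ n) ` U)" using \<delta>(2) by blast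
  have near: "dist ((f ^^ n) u) ((f ^^ (n mod m)) x0) < \<delta>/3" if "u \<in> U" for u
  proof -
    define w where "w = (f ^^ (n div m * m)) u"
    have u: "u \<in> X" "dist x0 u < \<rho>/2" using that by (auto simp: U_def)
    have "dist w x0 < \<rho>"
      using m(3)[OF u(1), of "n div m"] u(2) \<rho>(1) dist_triangle[of w x0 u] dist_commute[of x0 u]
      unfolding w_def by linarith
    moreover have "(f ^^ n) u = (f ^^ (n mod m)) w"
      by (metis w_def funpow_add comp_apply mod_div_mult_eq)
    moreover have "n mod m \<le> B" using m(1,2) by (meson le_trans less_imp_le mod_less_divisor)
    ultimately show ?thesis
      using \<rho>(2) funpow_mem[OF assms(2) u(1)] assms(4) by (simp add: w_def)
  qed
  have "diameter ((f ^^ n) ` U) \<le> 2 * (\<delta>/3)"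
  proof (rule diameter_le_dist_bound)
    fix a b assume "a \<in> (f ^^ n) ` U" "b \<in> (f ^^ n) ` U"
    then have "dist a ((f ^^ (n mod m)) x0) < \<delta>/3" "dist b ((f ^^ (n mod m)) x0) < \<delta>/3"
      using near by auto
    then show "dist a b \<le> 2 * (\<delta>/3)"
      using dist_triangle2[of a b "(f ^^ (n mod m)) x0"] by linarith
  qed (use \<delta>(1) in simp)
  then show False using n \<delta>(1) by simp
qed

definition pseudo_orbits_shadowed :: "'a::metric_space set \<Rightarrow> ('a \<Rightarrow> 'a) \<Rightarrow> real \<Rightarrow> real \<Rightarrow> bool" where
  "pseudo_orbits_shadowed X f \<delta> \<epsilon> \<longleftrightarrow> (\<forall>xs::nat \<Rightarrow> 'a.
      (\<forall>n. xs n \<in> X) \<and> (\<forall>n. dist (f (xs n)) (xs (Suc n)) \<le> \<delta>) \<longrightarrow>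
      (\<exists>y\<in>X. \<forall>n. dist ((f ^^ n) y) (xs n) < \<epsilon>))"

lemma shadowing_onD:
  "shadowing_on X f \<Longrightarrow> 0 < \<epsilon> \<Longrightarrow> \<exists>\<delta>>0. pseudo_orbits_shadowed X f \<delta> \<epsilon>"
  by (simp add: shadowing_on_def pseudo_orbits_shadowed_def)

inductive eps_chain :: "'a::metric_space set \<Rightarrow> ('a \<Rightarrow> 'a) \<Rightarrow> real \<Rightarrow> 'a \<Rightarrow> 'a \<Rightarrow> nat \<Rightarrow> bool"
  for X f e where
  refl: "x \<in> X \<Longrightarrow> eps_chain X f e x x 0"
| step: "eps_chain X f e x y k \<Longrightarrow> z \<in> X \<Longrightarrow> dist (f y) z < e \<Longrightarrow> eps_chain X f e x z (Suc k)"

lemma eps_chain_mem: "eps_chain X f e x y k \<Longrightarrow> x \<in> X \<and> y \<in> X"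
  by (induction rule: eps_chain.induct) auto

lemma eps_chain_trans:
  assumes "eps_chain X f e x y a" "eps_chain X f e y z b"
  shows "eps_chain X f e x z (a + b)"
  using assms(2,1) by (induction rule: eps_chain.induct) (auto intro: eps_chain.step)

lemma eps_chain_mono: "eps_chain X f e x y k \<Longrightarrow> e \<le> e' \<Longrightarrow> eps_chain X f e' x y k"
  by (induction rule: eps_chain.induct) (auto intro: eps_chain.intros)

lemma eps_chain_SucE:
  assumes "eps_chain X f e x z (Suc k)"
  obtains y where "eps_chain X f e x y k" "dist (f y) z < e"
  using assms by (cases rule: eps_chain.cases) auto

lemma eps_chain_imp_seq:
  "eps_chain X f e x y k \<Longrightarrow> \<exists>xs. xs 0 = x \<and> xs k = y \<and> (\<forall>i\<le>k. xs i \<in> X) \<and>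
     (\<forall>i<k. dist (f (xs i)) (xs (Suc i)) < e)"
proof (induction rule: eps_chain.induct)
  case (refl x)
  then show ?case by (intro exI[of _ "\<lambda>_. x"]) auto
next
  case (step x y k z)
  then obtain xs where "xs 0 = x" "xs k = y" "\<forall>i\<le>k. xs i \<in> X"
    "\<forall>i<k. dist (f (xs i)) (xs (Suc i)) < e"
    by blast
  with step.hyps show ?case
    by (intro exI[of _ "xs(Suc k := z)"]) (auto simp: le_Suc_eq less_Suc_eq)
qed

lemma eps_chain_loop_mult: "eps_chain X f e x x p \<Longrightarrow> eps_chain X f e x x (q * p)"
proof (induction q)
  case 0
  then show ?case using eps_chain_mem[of X f e x x p] by (simp add: eps_chain.refl)
next
  case (Suc q)
  then show ?case using eps_chain_trans[OF Suc.prems Suc.IH[OF Suc.prems]] by (simp add: add.commute)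
qed

lemma eps_chain_orbit:
  assumes "f ` X \<subseteq> X" "x \<in> X" "0 < e"
  shows "eps_chain X f e x ((f ^^ n) x) n"
proof (induction n)
  case (Suc n)
  then show ?case using assms funpow_mem[OF assms(1,2), of "Suc n"] by (auto intro: eps_chain.step)
qed (use assms in \<open>auto intro: eps_chain.refl\<close>)

lemma eps_chain_loop_periodic_pseudo_orbit:
  assumes "eps_chain X f e x x p" "0 < p"
  obtains ys where "\<And>n. ys n \<in> X" "\<And>n. dist (f (ys n)) (ys (Suc n)) \<le> e"
    "\<And>n. ys (p + n) = ys n"
proof -
  obtain xs where xs: "xs 0 = x" "xs p = x" "\<forall>i\<le>p. xs i \<in> X"
    "\<forall>i<p. dist (f (xs i)) (xs (Suc i)) < e"
    using eps_chain_imp_seq[OF assms(1)] by blast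
  define ys where "ys n = xs (n mod p)" for n
  have "ys n \<in> X" for n
    using xs(3) assms(2) by (simp add: ys_def less_imp_le)
  moreover have "dist (f (ys n)) (ys (Suc n)) \<le> e" for n
  proof -
    have "ys (Suc n) = xs (Suc (n mod p))"
      using xs(1,2) assms(2) by (cases "Suc (n mod p) = p") (simp_all add: ys_def mod_Suc)
    then show ?thesis using xs(4) assms(2) by (simp add: ys_def less_imp_le)
  qed
  ultimately show thesis
    using that[of ys] by (simp add: ys_def)
qed

section \<open>Minimal systems\<close>

locale minimal_system =
  fixes X :: "'a::metric_space set" and f :: "'a \<Rightarrow> 'a"
  assumes compact: "compact X" and maps_to: "f ` X \<subseteq> X" and continuous: "continuous_on X f"
    and minimal: "minimal_on X f"
begin

lemma closure_orbit: "x \<in> X \<Longrightarrow> closure {(f ^^ n) x | n. True} = X"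
  using minimal by (simp add: minimal_on_def)

lemma closed_superset_orbit:
  assumes "x \<in> X" "closed C" "\<And>n. (f ^^ n) x \<in> C"
  shows "X \<subseteq> C"
  using closure_minimal[of "{(f ^^ n) x | n. True}" C] assms closure_orbit[OF assms(1)] by blast

lemma eps_chain_connect:
  assumes "0 < e" "x \<in> X" "y \<in> X"
  obtains k where "eps_chain X f e x y (Suc k)"
proof -
  have "y \<in> closure {(f ^^ n) (f x) | n. True}"
    using closure_orbit maps_to assms by auto
  then obtain n where "dist ((f ^^ n) (f x)) y < e"
    using assms(1) by (auto simp: closure_approachable)
  then have "dist (f ((f ^^ n) x)) y < e" by (simp add: funpow_swap1)
  then show thesis
    using that eps_chain.step[OF eps_chain_orbit[OF maps_to assms(2,1)] assms(3)] by blast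
qed

lemma image_eq: "f ` X = X"
proof
  have "closed (f ` X)"
    using compact_continuous_image[OF continuous compact] by (rule compact_imp_closed)
  show "X \<subseteq> f ` X"
  proof
    fix x assume "x \<in> X"
    have "(f ^^ n) (f x) \<in> f ` X" for n
      using funpow_mem[OF maps_to \<open>x \<in> X\<close>] by (simp add: funpow_swap1[symmetric])
    then show "x \<in> f ` X"
      using closed_superset_orbit[of "f x"] \<open>closed (f ` X)\<close> maps_to \<open>x \<in> X\<close> by blast
  qed
qed (rule maps_to)

lemma funpow_image_eq: "(f ^^ n) ` X = X"
proof (induction n)
  case (Suc n)
  have "(f ^^ Suc n) ` X = f ` ((f ^^ n) ` X)" by (simp add: image_image)
  then show ?case using Suc image_eq by simp
qed simp

text \<open>Shadow the periodic pseudo-orbit that runs around the loop forever: the shadowing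
  orbit is moved by at most \<open>2\<epsilon>\<close> under \<open>f\<^sup>p\<close>, and by minimality it is dense.\<close>

lemma loop_displacement_le:
  assumes "0 < \<epsilon>" and shadowed: "pseudo_orbits_shadowed X f e \<epsilon>"
    and loop: "eps_chain X f e x x p" and "z \<in> X"
  shows "dist ((f ^^ p) z) z \<le> 2 * \<epsilon>"
proof (cases "p = 0")
  case True
  then show ?thesis using \<open>0 < \<epsilon>\<close> by simp
next
  case False
  obtain ys where "\<And>n. ys n \<in> X" "\<And>n. dist (f (ys n)) (ys (Suc n)) \<le> e"
    and periodic: "\<And>n. ys (p + n) = ys n"
    using eps_chain_loop_periodic_pseudo_orbit[OF loop] False by blast
  then obtain y where y: "y \<in> X" "\<And>n. dist ((f ^^ n) y) (ys n) < \<epsilon>"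
    using shadowed unfolding pseudo_orbits_shadowed_def by blast
  define C where "C = {w \<in> X. dist ((f ^^ p) w) w \<le> 2 * \<epsilon>}"
  have "continuous_on X (\<lambda>w. dist ((f ^^ p) w) w)"
    by (intro continuous_on_dist continuous_on_funpow[OF maps_to continuous] continuous_on_id)
  then have "closed (X \<inter> (\<lambda>w. dist ((f ^^ p) w) w) -` {..2 * \<epsilon>})"
    using compact_imp_closed[OF compact] by (rule continuous_closed_preimage) simp
  moreover have "C = X \<inter> (\<lambda>w. dist ((f ^^ p) w) w) -` {..2 * \<epsilon>}"
    by (auto simp: C_def)
  ultimately have "closed C" by simp
  have "(f ^^ n) y \<in> C" for n
  proof -
    have "dist ((f ^^ p) ((f ^^ n) y)) (ys n) < \<epsilon>"
      using y(2)[of "p + n"] by (simp add: periodic funpow_add)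
    then have "dist ((f ^^ p) ((f ^^ n) y)) ((f ^^ n) y) \<le> 2 * \<epsilon>"
      using y(2)[of n] dist_triangle2[of "(f ^^ p) ((f ^^ n) y)" "(f ^^ n) y" "ys n"] by linarith
    then show ?thesis unfolding C_def using funpow_mem[OF maps_to y(1)] by simp
  qed
  then have "X \<subseteq> C"
    using closed_superset_orbit[OF y(1) \<open>closed C\<close>] by blast
  then show ?thesis using \<open>z \<in> X\<close> by (simp add: C_def subset_iff)
qed

end

section \<open>Chain periods and phases\<close>

lemma least_pos_dvd_diff_closed:
  fixes H :: "int set" and n :: nat
  assumes diff: "\<And>a b. a \<in> H \<Longrightarrow> b \<in> H \<Longrightarrow> a - b \<in> H"
    and n_pos: "0 < n" and n: "int n \<in> H" and least: "\<And>m. 0 < m \<Longrightarrow> int m \<in> H \<Longrightarrow> n \<le> m"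
    and h: "h \<in> H"
  shows "int n dvd h"
proof -
  have nat_case: "int n dvd int m" if "int m \<in> H" for m
    using that
  proof (induction m rule: less_induct)
    case (less m)
    show ?case
    proof (cases "m < n")
      case True
      then show ?thesis using least[OF _ less.prems] by (cases "m = 0") auto
    next
      case False
      then have "int (m - n) \<in> H" using diff[OF less.prems n] by (simp add: of_nat_diff)
      moreover have "m - n < m" using False n_pos by simp
      ultimately have "int n dvd int (m - n)" using less.IH by blast
      moreover have "int m = int (m - n) + int n" using False by simp
      ultimately show ?thesis by (metis dvd_add dvd_refl)
    qed
  qed
  have "- h \<in> H" using diff[OF diff[OF h h] h] by simp
  then show ?thesis
    using h nat_case[of "nat h"] nat_case[of "nat (- h)"] by (cases "0 \<le> h") auto
qed

locale pointed_minimal_system = minimal_system +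
  fixes x0 :: "'a::metric_space"
  assumes base_mem: "x0 \<in> X"
begin

definition loop_length_diffs :: "real \<Rightarrow> int set" where
  "loop_length_diffs e =
     {int p - int q | p q. eps_chain X f e x0 x0 p \<and> eps_chain X f e x0 x0 q}"

definition chain_period :: "real \<Rightarrow> nat" where
  "chain_period e = (LEAST n. 0 < n \<and> int n \<in> loop_length_diffs e)"

definition chain_phase :: "real \<Rightarrow> 'a \<Rightarrow> nat" where
  "chain_phase e y = (SOME k. eps_chain X f e x0 y k) mod chain_period e"

lemma loop_length_diffs_diff:
  assumes "a \<in> loop_length_diffs e" "b \<in> loop_length_diffs e"
  shows "a - b \<in> loop_length_diffs e"
proof -
  obtain p q p' q' where a: "a = int p - int q" "eps_chain X f e x0 x0 p" "eps_chain X f e x0 x0 q"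
    and b: "b = int p' - int q'" "eps_chain X f e x0 x0 p'" "eps_chain X f e x0 x0 q'"
    using assms unfolding loop_length_diffs_def by blast
  have "a - b = int (p + q') - int (q + p')" using a b by simp
  with eps_chain_trans[OF a(2) b(3)] eps_chain_trans[OF a(3) b(2)] show ?thesis
    unfolding loop_length_diffs_def by blast
qed

lemma chain_period_pos_mem:
  assumes "0 < e"
  shows chain_period_pos: "0 < chain_period e"
    and chain_period_mem: "int (chain_period e) \<in> loop_length_diffs e"
proof -
  obtain k where "eps_chain X f e x0 x0 (Suc k)"
    using eps_chain_connect[OF assms base_mem base_mem] by blast
  then have "int (Suc k) - int 0 \<in> loop_length_diffs e"
    unfolding loop_length_diffs_def using eps_chain.refl[OF base_mem] by blast
  then have "\<exists>n. 0 < n \<and> int n \<in> loop_length_diffs e" by (intro exI[of _ "Suc k"]) simp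
  then show "0 < chain_period e" "int (chain_period e) \<in> loop_length_diffs e"
    unfolding chain_period_def by (metis (mono_tags, lifting) LeastI_ex)+
qed

lemma chain_period_dvd:
  assumes "0 < e" "h \<in> loop_length_diffs e"
  shows "int (chain_period e) dvd h"
  by (rule least_pos_dvd_diff_closed[OF loop_length_diffs_diff chain_period_pos_mem[OF assms(1)]])
    (use assms(2) in \<open>auto simp: chain_period_def intro: Least_le\<close>)

text \<open>All \<open>e\<close>-chains from \<open>x0\<close> to \<open>y\<close> have congruent lengths modulo the period:
  closing them up with a common chain back to \<open>x0\<close> makes two loops.\<close>

lemma chain_length_mod_period:
  assumes "0 < e" "eps_chain X f e x0 y k" "eps_chain X f e x0 y k'"
  shows "k mod chain_period e = k' mod chain_period e"
proof -
  obtain j where j: "eps_chain X f e y x0 (Suc j)"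
    using eps_chain_connect[OF assms(1) _ base_mem] eps_chain_mem[OF assms(2)] by blast
  have "int (k + Suc j) - int (k' + Suc j) \<in> loop_length_diffs e"
    using eps_chain_trans[OF assms(2) j] eps_chain_trans[OF assms(3) j]
    unfolding loop_length_diffs_def by blast
  then have "int (chain_period e) dvd int k - int k'"
    using chain_period_dvd[OF assms(1)] by simp
  then show ?thesis
    by (metis mod_eq_dvd_iff of_nat_eq_iff of_nat_mod)
qed

lemma chain_phase_eq:
  assumes "0 < e" "eps_chain X f e x0 y k"
  shows "chain_phase e y = k mod chain_period e"
  using chain_length_mod_period[OF assms(1) someI[of "eps_chain X f e x0 y", OF assms(2)] assms(2)]
  by (simp add: chain_phase_def)

lemma chain_phase_base: "0 < e \<Longrightarrow> chain_phase e x0 = 0"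
  using chain_phase_eq[OF _ eps_chain.refl[OF base_mem]] by simp

lemma chain_phase_step:
  assumes "0 < e" "y \<in> X"
  shows "chain_phase e (f y) = Suc (chain_phase e y) mod chain_period e"
proof -
  obtain k where k: "eps_chain X f e x0 y k"
    using eps_chain_connect[OF assms(1) base_mem assms(2)] by blast
  have "eps_chain X f e x0 (f y) (Suc k)"
    using eps_chain.step[OF k] maps_to assms by auto
  then show ?thesis
    using chain_phase_eq[OF assms(1) k] chain_phase_eq[OF assms(1)] by (simp add: mod_Suc_eq)
qed

lemma chain_phase_locally_const:
  assumes "0 < e" "y \<in> X"
  obtains r where "0 < r" "\<And>z. z \<in> X \<Longrightarrow> dist z y < r \<Longrightarrow> chain_phase e z = chain_phase e y"
proof -
  obtain k where k: "eps_chain X f e x0 y (Suc k)"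
    using eps_chain_connect[OF assms(1) base_mem assms(2)] by blast
  then obtain w where w: "eps_chain X f e x0 w k" "dist (f w) y < e"
    by (rule eps_chain_SucE)
  have "chain_phase e z = chain_phase e y" if "z \<in> X" "dist z y < e - dist (f w) y" for z
  proof -
    have "dist (f w) z < e" using that dist_triangle[of "f w" z y] by (simp add: dist_commute)
    then show ?thesis
      using chain_phase_eq[OF assms(1)] eps_chain.step[OF w(1) \<open>z \<in> X\<close>] k by simp
  qed
  then show thesis using that[of "e - dist (f w) y"] w(2) by simp
qed

lemma chain_period_dvd_antimono:
  assumes "0 < e'" "e' \<le> e"
  shows "chain_period e dvd chain_period e'"
proof -
  have "loop_length_diffs e' \<subseteq> loop_length_diffs e"
    unfolding loop_length_diffs_def using eps_chain_mono[OF _ assms(2)] by blast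
  then show ?thesis
    using chain_period_dvd[of e "int (chain_period e')"] chain_period_mem[OF assms(1)] assms
    by auto
qed

lemma chain_phase_mod_chain_period:
  assumes "0 < e'" "e' \<le> e" "y \<in> X"
  shows "chain_phase e' y mod chain_period e = chain_phase e y"
proof -
  obtain k where k: "eps_chain X f e' x0 y k"
    using eps_chain_connect[OF assms(1) base_mem assms(3)] by blast
  have "chain_phase e y = k mod chain_period e"
    using chain_phase_eq[OF _ eps_chain_mono[OF k assms(2)]] assms by simp
  then show ?thesis
    using chain_phase_eq[OF assms(1) k] chain_period_dvd_antimono[OF assms(1,2)]
    by (simp add: mod_mod_cancel)
qed

text \<open>Writing the period as a difference \<open>P - Q\<close> of loop lengths, \<open>f\<^bsup>qP\<^esup>\<close> and
  \<open>f\<^bsup>qQ\<^esup>\<close> both nearly fix every point, and \<open>f\<^bsup>qQ\<^esup>\<close> is onto.\<close>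

lemma period_multiple_displacement_le:
  assumes "0 < \<epsilon>" "0 < e" "pseudo_orbits_shadowed X f e \<epsilon>" "z \<in> X"
  shows "dist ((f ^^ (q * chain_period e)) z) z \<le> 4 * \<epsilon>"
proof -
  obtain P Q where PQ: "int (chain_period e) = int P - int Q"
    "eps_chain X f e x0 x0 P" "eps_chain X f e x0 x0 Q"
    using chain_period_mem[OF assms(2)] unfolding loop_length_diffs_def by blast
  obtain x where x: "x \<in> X" "z = (f ^^ (q * Q)) x"
    using funpow_image_eq[of "q * Q"] assms(4) by blast
  have "P = chain_period e + Q" using PQ(1) by linarith
  then have "q * P = q * chain_period e + q * Q" by (simp add: algebra_simps)
  then have shift: "(f ^^ (q * chain_period e)) z = (f ^^ (q * P)) x"
    by (simp add: x(2) funpow_add)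
  have "dist ((f ^^ (q * P)) x) x \<le> 2 * \<epsilon>" "dist z x \<le> 2 * \<epsilon>"
    using loop_displacement_le[OF assms(1,3) eps_chain_loop_mult x(1)] PQ(2,3) x(2) by auto
  then have "dist ((f ^^ (q * P)) x) z \<le> 4 * \<epsilon>"
    using dist_triangle2[of "(f ^^ (q * P)) x" z x] by linarith
  then show ?thesis by (simp only: shift)
qed

lemma chain_period_unbounded:
  assumes "sensitive_on X f" "shadowing_on X f"
  shows "\<exists>e>0. B < chain_period e"
proof (rule ccontr)
  assume "\<not> ?thesis"
  then have bounded: "chain_period e \<le> B" if "0 < e" for e
    using that by (meson not_le)
  have "\<exists>m. 0 < m \<and> m \<le> B \<and> (\<forall>q. \<forall>z\<in>X. dist ((f ^^ (q * m)) z) z \<le> \<epsilon>)" if eps: "0 < \<epsilon>" for \<epsilon>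
  proof -
    obtain e where e: "0 < e" "pseudo_orbits_shadowed X f e (\<epsilon>/4)"
      using shadowing_onD[OF assms(2), of "\<epsilon>/4"] eps by auto
    then show ?thesis
      using bounded[OF e(1)] chain_period_pos[OF e(1)] period_multiple_displacement_le[OF _ e(1,2)] eps
      by (intro exI[of _ "chain_period e"]) (auto simp: not_less)
  qed
  then show False
    using not_sensitive_on_if_bounded_almost_periods[OF compact maps_to continuous] base_mem assms(1)
    by blast
qed

section \<open>The odometer factor\<close>

lemma primes_dividing_chain_periods:
  assumes "sensitive_on X f" "shadowing_on X f"
  obtains \<alpha> where "\<And>i. prime (\<alpha> i)" "\<And>k. \<exists>e>0. place_value \<alpha> k dvd chain_period e"
proof -
  define scale :: "nat \<Rightarrow> real" where "scale j = 1 / real (Suc j)" for j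
  have scale_pos: "0 < scale j" for j
    by (simp add: scale_def)
  have scale_antimono: "scale j' \<le> scale j" if "j \<le> j'" for j j'
    using that by (simp add: scale_def frac_le)
  have "\<exists>j. B < chain_period (scale j)" for B
  proof -
    obtain e where e: "0 < e" "B < chain_period e"
      using chain_period_unbounded[OF assms] by blast
    then obtain j where "scale j < e"
      using reals_Archimedean by (auto simp: scale_def inverse_eq_divide)
    then have "chain_period e dvd chain_period (scale j)"
      by (simp add: chain_period_dvd_antimono scale_pos)
    then show ?thesis
      using e(2) chain_period_pos[OF scale_pos] by (metis dvd_imp_le order.strict_trans2)
  qed
  then obtain \<alpha> where "\<And>i. prime (\<alpha> i)" "\<And>k. \<exists>j. place_value \<alpha> k dvd chain_period (scale j)"
    using primes_dividing_divisibility_chain[of "\<lambda>j. chain_period (scale j)"]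
      chain_period_pos[OF scale_pos] chain_period_dvd_antimono[OF scale_pos scale_antimono]
    by blast
  then show thesis
    using that scale_pos by blast
qed

lemma odometer_residues:
  assumes "sensitive_on X f" "shadowing_on X f"
  obtains \<alpha> c where "\<And>i. prime (\<alpha> i)"
    and "\<And>y. y \<in> X \<Longrightarrow> compatible_residues \<alpha> (\<lambda>k. c k y)"
    and "\<And>k y. y \<in> X \<Longrightarrow> c k (f y) = Suc (c k y) mod place_value \<alpha> k"
    and "\<And>k n. c k ((f ^^ n) x0) = n mod place_value \<alpha> k"
    and "\<And>k y. y \<in> X \<Longrightarrow> \<exists>r>0. \<forall>z\<in>X. dist z y < r \<longrightarrow> c k z = c k y"
proof -
  obtain \<alpha> where \<alpha>: "\<And>i. prime (\<alpha> i)" "\<And>k. \<exists>e>0. place_value \<alpha> k dvd chain_period e"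
    using primes_dividing_chain_periods[OF assms] by blast
  have \<alpha>_pos: "0 < \<alpha> i" for i
    using \<alpha>(1) prime_gt_0_nat by blast
  define E where "E k = (SOME e. 0 < e \<and> place_value \<alpha> k dvd chain_period e)" for k
  have E: "0 < E k" "place_value \<alpha> k dvd chain_period (E k)" for k
    unfolding E_def using someI_ex[OF \<alpha>(2)] by blast+
  define c where "c k y = chain_phase (E k) y mod place_value \<alpha> k" for k y
  have c_finer: "c k y = chain_phase e y mod place_value \<alpha> k" if "0 < e" "e \<le> E k" "y \<in> X" for k e y
    using chain_phase_mod_chain_period[OF that] E(2)[of k] by (metis c_def mod_mod_cancel)
  have compatible: "compatible_residues \<alpha> (\<lambda>k. c k y)" if "y \<in> X" for y
  proof -
    have "c (Suc k) y mod place_value \<alpha> k = c k y" for k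
      using c_finer[of "min (E k) (E (Suc k))" k y] c_finer[of "min (E k) (E (Suc k))" "Suc k" y]
        E(1) place_value_dvd[of k "Suc k" \<alpha>] that
      by (simp add: mod_mod_cancel)
    then show ?thesis
      using place_value_pos[OF \<alpha>_pos] by (simp add: compatible_residues_def c_def)
  qed
  have step: "c k (f y) = Suc (c k y) mod place_value \<alpha> k" if "y \<in> X" for k y
    using chain_phase_step[OF E(1) that, of k] E(2)[of k]
    by (simp add: c_def mod_mod_cancel mod_Suc_eq)
  have orbit: "c k ((f ^^ n) x0) = n mod place_value \<alpha> k" for k n
  proof (induction n)
    case 0
    show ?case by (simp add: c_def chain_phase_base[OF E(1)])
  next
    case (Suc n)
    then show ?case
      using step[OF funpow_mem[OF maps_to base_mem, of n]] by (simp add: mod_Suc_eq)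
  qed
  have "\<exists>r>0. \<forall>z\<in>X. dist z y < r \<longrightarrow> c k z = c k y" if "y \<in> X" for k y
    using chain_phase_locally_const[OF E(1) that, of k] unfolding c_def by metis
  with \<alpha>(1) compatible step orbit show thesis
    by (rule that[of \<alpha> c])
qed

lemma odometer_factor:
  assumes "sensitive_on X f" "shadowing_on X f"
  shows "\<exists>(\<alpha>::nat \<Rightarrow> nat) (\<pi>::'a \<Rightarrow> nat \<Rightarrow> nat).
           (\<forall>i. prime (\<alpha> i)) \<and>
           \<pi> ` X \<subseteq> Delta \<alpha> \<and>
           continuous_into_Delta X \<pi> \<and>
           (\<forall>x\<in>X. g_alpha \<alpha> (\<pi> x) = \<pi> (f x)) \<and>
           (\<exists>D\<subseteq>X. X \<subseteq> closure D \<and> inj_on \<pi> D)"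
proof -
  obtain \<alpha> c where prime: "\<And>i. prime (\<alpha> i)"
    and compatible: "\<And>y. y \<in> X \<Longrightarrow> compatible_residues \<alpha> (\<lambda>k. c k y)"
    and step: "\<And>k y. y \<in> X \<Longrightarrow> c k (f y) = Suc (c k y) mod place_value \<alpha> k"
    and orbit: "\<And>k n. c k ((f ^^ n) x0) = n mod place_value \<alpha> k"
    and locally_const: "\<And>k y. y \<in> X \<Longrightarrow> \<exists>r>0. \<forall>z\<in>X. dist z y < r \<longrightarrow> c k z = c k y"
    using odometer_residues[OF assms] by blast
  have \<alpha>_pos: "\<And>i. 0 < \<alpha> i" and \<alpha>_ge_2: "\<And>i. 2 \<le> \<alpha> i"
    using prime prime_gt_0_nat prime_ge_2_nat by blast+
  define \<pi> where "\<pi> y = digits \<alpha> (\<lambda>k. c k y)" for y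
  have "\<pi> ` X \<subseteq> Delta \<alpha>"
    using digits_less[OF \<alpha>_pos compatible] by (auto simp: \<pi>_def Delta_def)
  moreover have "continuous_into_Delta X \<pi>"
    unfolding \<pi>_def by (rule continuous_into_Delta_digits[OF \<alpha>_pos compatible locally_const])
  moreover have "\<forall>x\<in>X. g_alpha \<alpha> (\<pi> x) = \<pi> (f x)"
    using g_alpha_digits[OF \<alpha>_pos compatible] step by (simp add: \<pi>_def)
  moreover have "inj_on \<pi> {(f ^^ n) x0 | n. True}"
  proof (rule inj_onI)
    fix y z
    assume "y \<in> {(f ^^ n) x0 | n. True}" "z \<in> {(f ^^ n) x0 | n. True}" "\<pi> y = \<pi> z"
    then obtain n n' where "y = (f ^^ n) x0" "z = (f ^^ n') x0" "\<pi> y = \<pi> z" by blast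
    moreover have "n = n'"
      using injD[OF inj_digits_of_nat[of \<alpha>, OF \<alpha>_ge_2]] calculation by (simp add: \<pi>_def orbit)
    ultimately show "y = z" by simp
  qed
  moreover have "{(f ^^ n) x0 | n. True} \<subseteq> X" "X \<subseteq> closure {(f ^^ n) x0 | n. True}"
    using funpow_mem[OF maps_to base_mem] closure_orbit[OF base_mem] by auto
  ultimately show ?thesis
    using prime by blast
qed

end

theorem theorem4p11:
  fixes X :: "'a::metric_space set" and f :: "'a \<Rightarrow> 'a"
  assumes "compact X" and "f ` X \<subseteq> X" and "continuous_on X f"
    and "sensitive_on X f" and "minimal_on X f" and "shadowing_on X f"
  shows "\<exists>(\<alpha>::nat \<Rightarrow> nat) (\<pi>::'a \<Rightarrow> nat \<Rightarrow> nat).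
           (\<forall>i. prime (\<alpha> i)) \<and>
           \<pi> ` X \<subseteq> Delta \<alpha> \<and>
           continuous_into_Delta X \<pi> \<and>
           (\<forall>x\<in>X. g_alpha \<alpha> (\<pi> x) = \<pi> (f x)) \<and>
           (\<exists>D\<subseteq>X. X \<subseteq> closure D \<and> inj_on \<pi> D)"
proof (cases "X = {}")
  case True
  show ?thesis
    by (rule exI[of _ "\<lambda>_. 2"], rule exI[of _ "\<lambda>_ _. 0"]) (simp add: True continuous_into_Delta_def)
next
  case False
  then obtain x0 where "x0 \<in> X" by blast
  then interpret pointed_minimal_system X f x0
    by unfold_locales (use assms in auto)
  show ?thesis
    using odometer_factor assms by blast
qed

end
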